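(* Let $K\subseteq X_F$ be the subcomplex consisting of the edge joining $*$ to $T_{0,0}$ together with, for all integers $m,n\ge0$, the square with vertices $T_{m,n},T_{m+1,n},T_{m,n+1},T_{m+1,n+1}$; thus $K$ is identified with $\{(a,b)\in\mathbb R^2: a,b\ge0\}\cup I$, where $I$ is a unit segment meeting the quadrant only at $(0,0)=T_{0,0}$, with $T_{m,n}=(m,n)$. Then the inclusion $K\to X_F$ is an isometric embedding (with $K$ carrying its own length metric).
   Context: Let $\mathcal P=\langle x\mid x=x^2\rangle$. $X_F$ is the CAT(0) cubical complex whose vertices are reduced planar $(x,* )$-pictures over $\mathcal P$ (frame, $(x,x^2)$- and $(x^2,x)$-transistors and wires embedded in the plane, with no dipoles) and whose $n$-cubes are such pictures with $n$ maximal transistors marked white, the vertices of the cube being obtained by keeping or deleting each white transistor with its bottom wires; $*$ is the picture without transistors. Finite ordered rooted binary trees (pictures with only $(x,x^2)$-transistors, "carets") are vertices; label carets by binary strings (root empty; children of $s$ are $s0$ left, $s1$ right). $T_{m,n}$ is the tree with carets exactly at $\emptyset,0,00,\dots,0^m,1,11,\dots,1^n$ (a root caret with $m$ carets descending to the left and $n$ to the right). The square with vertices $T_{m,n},T_{m+1,n},T_{m,n+1},T_{m+1,n+1}$ is the cube given by $T_{m+1,n+1}$ with the carets $0^{m+1}$ and $1^{n+1}$ white. *)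

theory Defs
  imports Complex_Main
begin

text \<open>A reduced picture with top label x is, up to planar isotopy, a layer of
(x,x^2)-transistors (splits) forming a binary tree T, followed by a layer of
(x^2,x)-transistors (merges) forming an ordered forest E (one tree per bottom
wire, read upwards: leaves = middle wires, roots = bottom wires).  No dipoles
means that no split caret of T sits on the same two middle wires as a merge
caret of E (merge-then-split dipoles cannot occur in this normal form).\<close>

datatype tree = Leaf | Node tree tree

fun leaves :: "tree \<Rightarrow> nat" where
  "leaves Leaf = 1"
| "leaves (Node l r) = leaves l + leaves r"

text \<open>Index (of the left leaf) of all carets both of whose children are leaves;
k is the global index of the first leaf of the tree.\<close>
fun mcarets :: "nat \<Rightarrow> tree \<Rightarrow> nat set" where
  "mcarets k Leaf = {}"
| "mcarets k (Node l r) =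
     (if l = Leaf \<and> r = Leaf then {k} else mcarets k l \<union> mcarets (k + leaves l) r)"

type_synonym picture = "tree \<times> tree list"

definition mid :: "tree list \<Rightarrow> nat \<Rightarrow> nat" where
  "mid E j = sum_list (map leaves (take j E))"

definition reduced :: "picture \<Rightarrow> bool" where
  "reduced P = (case P of (T, E) \<Rightarrow>
     mcarets 0 T \<inter> (\<Union>j<length E. mcarets (mid E j) (E ! j)) = {})"

definition vertices :: "picture set" where
  "vertices = {(T, E). leaves T = sum_list (map leaves E) \<and> reduced (T, E)}"

text \<open>Maximal transistors, named by their bottom wires: a merge whose output is
bottom wire j, or a split whose two outputs are bottom wires j, j+1.\<close>
datatype mtrans = MMerge nat | MSplit nat

definition maxtr :: "picture \<Rightarrow> mtrans set" where
  "maxtr P = (case P of (T, E) \<Rightarrow>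
     {MMerge j | j. j < length E \<and> E ! j \<noteq> Leaf}
   \<union> {MSplit j | j. Suc j < length E \<and> E ! j = Leaf \<and> E ! Suc j = Leaf
                      \<and> mid E j \<in> mcarets 0 T})"

fun prune :: "nat set \<Rightarrow> nat \<Rightarrow> tree \<Rightarrow> tree" where
  "prune S k Leaf = Leaf"
| "prune S k (Node l r) =
     (if l = Leaf \<and> r = Leaf \<and> k \<in> S then Leaf
      else Node (prune S k l) (prune S (k + leaves l) r))"

text \<open>Delete a set D of maximal transistors, each together with its bottom wires.\<close>
definition del :: "picture \<Rightarrow> mtrans set \<Rightarrow> picture" where
  "del P D = (case P of (T, E) \<Rightarrow>
     (prune {mid E j | j. MSplit j \<in> D} 0 T,
      concat (map (\<lambda>j. if MMerge j \<in> D
                        then (case E ! j of Node a b \<Rightarrow> [a, b] | Leaf \<Rightarrow> [Leaf])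
                        else if 0 < j \<and> MSplit (j - 1) \<in> D then []
                        else [E ! j]) [0..<length E])))"

type_synonym cube = "picture \<times> mtrans set"

text \<open>Cubes of X_F: a reduced picture with a set of maximal transistors marked white.\<close>
definition XF_cubes :: "cube set" where
  "XF_cubes = {(P, W). P \<in> vertices \<and> W \<subseteq> maxtr P}"

text \<open>A point of a cube (P,W) with coordinates t (t w = 1: keep w, t w = 0: delete w)
is represented by its product weights on the vertices of the cube; this
representation automatically respects face identifications.\<close>

definition box :: "mtrans set \<Rightarrow> (mtrans \<Rightarrow> real) set" where
  "box W = {t. \<forall>w\<in>W. 0 \<le> t w \<and> t w \<le> 1}"

definition cweight :: "cube \<Rightarrow> (mtrans \<Rightarrow> real) \<Rightarrow> picture \<Rightarrow> real" where
  "cweight C t = (\<lambda>v. \<Sum>S\<in>Pow (snd C).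
      if v = del (fst C) (snd C - S)
      then (\<Prod>w\<in>S. t w) * (\<Prod>w\<in>snd C - S. 1 - t w) else 0)"

definition eucl :: "mtrans set \<Rightarrow> (mtrans \<Rightarrow> real) \<Rightarrow> (mtrans \<Rightarrow> real) \<Rightarrow> real" where
  "eucl W t s = sqrt (\<Sum>w\<in>W. (t w - s w)^2)"

definition pts :: "cube set \<Rightarrow> (picture \<Rightarrow> real) set" where
  "pts Cs = {cweight C t | C t. C \<in> Cs \<and> t \<in> box (snd C)}"

definition cmetric :: "cube set \<Rightarrow> (picture \<Rightarrow> real) \<Rightarrow> (picture \<Rightarrow> real) \<Rightarrow> real" where
  "cmetric Cs x y = Inf {(\<Sum>i<k. eucl (snd (C i)) (t i) (s i)) | k C t s p.
      p 0 = x \<and> p k = y \<and>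
      (\<forall>i<k. C i \<in> Cs \<and> t i \<in> box (snd (C i)) \<and> s i \<in> box (snd (C i)) \<and>
              p i = cweight (C i) (t i) \<and> p (Suc i) = cweight (C i) (s i))}"

fun combl :: "nat \<Rightarrow> tree" where
  "combl 0 = Leaf"
| "combl (Suc k) = Node (combl k) Leaf"

fun combr :: "nat \<Rightarrow> tree" where
  "combr 0 = Leaf"
| "combr (Suc k) = Node Leaf (combr k)"

definition Tmn :: "nat \<Rightarrow> nat \<Rightarrow> tree" where
  "Tmn m n = Node (combl m) (combr n)"

definition tree_pic :: "tree \<Rightarrow> picture" where
  "tree_pic T = (T, replicate (leaves T) Leaf)"

text \<open>The edge from * to T_{0,0} and, for all m n, the square given by
T_{m+1,n+1} with carets 0^{m+1} (bottom wires 0,1) and 1^{n+1}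
(bottom wires m+n+2, m+n+3) white.\<close>
definition K_cubes :: "cube set" where
  "K_cubes = {(tree_pic (Tmn 0 0), {MSplit 0})}
     \<union> {(tree_pic (Tmn (Suc m) (Suc n)), {MSplit 0, MSplit (m + n + 2)}) | m n. True}"

end

theory Submission
  imports Defs "HOL-Analysis.L2_Norm"
begin

(* Strings inside K are strings in X_F, so only d_XF >= d_K needs an argument, and we calibrate.
   A function g on the vertices of X_F is extended multilinearly to every cube (lin_ext); if on
   each cube g drops by a fixed amount d_w across each white transistor w, with sum of d_w^2 <= 1,
   the extension is affine with gradient of norm <= 1 there, so g(y) - g(x) is at most the length
   of any string from x to y in X_F.  We take g = alpha (l - 1) + beta (r - 1), with l and r the
   lengths of the left and right spines of the tree, and g(star) = -gamma: deleting a maximal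
   transistor changes l or r only if it is the first or the last split, so this works whenever
   alpha^2 + beta^2 <= 1 and gamma^2 <= 1.  On K, g is (a, b) |-> alpha a + beta b on the quadrant
   and s |-> -gamma s on the segment, and a suitable choice of alpha, beta, gamma shows that the
   obvious piecewise straight string in K between two points is shortest in X_F. *)

fun left_spine :: "tree \<Rightarrow> nat" where
  "left_spine Leaf = 0"
| "left_spine (Node l r) = Suc (left_spine l)"

fun right_spine :: "tree \<Rightarrow> nat" where
  "right_spine Leaf = 0"
| "right_spine (Node l r) = Suc (right_spine r)"

lemma leaves_ge_1: "1 \<le> leaves T"
  by (induction T) auto

lemma leaves_eq_1_iff: "leaves T = 1 \<longleftrightarrow> T = Leaf"
proof (cases T)
  case (Node l r)
  then show ?thesis using leaves_ge_1[of l] leaves_ge_1[of r] by simp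
qed simp

lemma leaves_eq_2_iff: "leaves T = 2 \<longleftrightarrow> T = Node Leaf Leaf"
proof (cases T)
  case (Node l r)
  then show ?thesis
    using leaves_ge_1[of l] leaves_ge_1[of r] leaves_eq_1_iff[of l] leaves_eq_1_iff[of r] by auto
qed simp

lemma mcarets_bounds: "p \<in> mcarets k T \<Longrightarrow> k \<le> p \<and> p + 2 \<le> k + leaves T"
proof (induction k T rule: mcarets.induct)
  case (2 k l r)
  then show ?case
    using leaves_ge_1[of l] leaves_ge_1[of r] by (fastforce split: if_splits)
qed simp

lemma left_spine_prune:
  "left_spine (prune S k T) = (if k \<in> S \<and> k \<in> mcarets k T then left_spine T - 1 else left_spine T)"
proof (induction S k T rule: prune.induct)
  case (2 S k l r)
  have "k \<notin> mcarets (k + leaves l) r"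
    using mcarets_bounds[of k "k + leaves l" r] leaves_ge_1[of l] by auto
  moreover have "l \<noteq> Leaf \<Longrightarrow> 1 \<le> left_spine l" by (cases l) auto
  ultimately show ?case using 2 by (cases "l = Leaf") auto
qed simp

lemma right_spine_prune:
  "right_spine (prune S k T) =
     (if k + leaves T - 2 \<in> S \<and> k + leaves T - 2 \<in> mcarets k T then right_spine T - 1
      else right_spine T)"
proof (induction S k T rule: prune.induct)
  case (2 S k l r)
  have "k + (leaves l + leaves r) - 2 \<notin> mcarets k l"
    using mcarets_bounds[of _ k l] leaves_ge_1[of r] by force
  moreover have "r \<noteq> Leaf \<Longrightarrow> 1 \<le> right_spine r" by (cases r) auto
  ultimately show ?case using 2 by (cases "r = Leaf") (auto simp: add.assoc)
qed simp

lemma prune_eq_LeafD: "prune S k T = Leaf \<Longrightarrow> T = Leaf \<or> T = Node Leaf Leaf"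
  by (induction S k T rule: prune.induct) (auto split: if_splits)

lemma length_le_sum_leaves: "length E \<le> sum_list (map leaves E)"
proof (induction E)
  case (Cons T E)
  then show ?case using leaves_ge_1[of T] by simp
qed simp

lemma mid_0 [simp]: "mid E 0 = 0"
  by (simp add: mid_def)

lemma mid_ge: "j \<le> length E \<Longrightarrow> j \<le> mid E j"
  unfolding mid_def using length_le_sum_leaves[of "take j E"] by simp

lemma mid_Suc: "j < length E \<Longrightarrow> mid E (Suc j) = mid E j + leaves (E ! j)"
  by (simp add: mid_def take_Suc_conv_app_nth)

lemma mid_add_sum_drop: "mid E j + sum_list (map leaves (drop j E)) = sum_list (map leaves E)"
  unfolding mid_def by (metis append_take_drop_id map_append sum_list_append)

lemma MSplit_in_maxtrD:
  "MSplit j \<in> maxtr (T, E) \<Longrightarrow>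
     Suc j < length E \<and> E ! j = Leaf \<and> E ! Suc j = Leaf \<and> mid E j \<in> mcarets 0 T"
  by (auto simp: maxtr_def)

lemma finite_maxtr: "finite (maxtr P)"
proof -
  obtain T E where P: "P = (T, E)" by fastforce
  have "maxtr P \<subseteq> MMerge ` {..<length E} \<union> MSplit ` {..<length E}"
    unfolding P maxtr_def by auto
  then show ?thesis by (rule finite_subset) auto
qed

lemma fst_del: "fst (del (T, E) D) = prune {mid E j | j. MSplit j \<in> D} 0 T"
  by (simp add: del_def)

lemma first_split_deleted_iff:
  assumes "D \<subseteq> maxtr (T, E)"
  shows "0 \<in> {mid E j | j. MSplit j \<in> D} \<and> 0 \<in> mcarets 0 T \<longleftrightarrow> MSplit 0 \<in> D"
proof
  assume "0 \<in> {mid E j | j. MSplit j \<in> D} \<and> 0 \<in> mcarets 0 T"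
  then obtain j where "mid E j = 0" "MSplit j \<in> D" by auto
  moreover from this have "j \<le> mid E j"
    using assms MSplit_in_maxtrD[of j T E] by (intro mid_ge) auto
  ultimately show "MSplit 0 \<in> D" by simp
next
  assume "MSplit 0 \<in> D"
  then show "0 \<in> {mid E j | j. MSplit j \<in> D} \<and> 0 \<in> mcarets 0 T"
    using assms MSplit_in_maxtrD[of 0 T E] by force
qed

lemma last_split_iff:
  assumes "(T, E) \<in> vertices" "MSplit j \<in> maxtr (T, E)"
  shows "mid E j = leaves T - 2 \<longleftrightarrow> Suc (Suc j) = length E"
proof -
  note split = MSplit_in_maxtrD[OF assms(2)]
  define R where "R = sum_list (map leaves (drop (Suc (Suc j)) E))"
  have "mid E (Suc (Suc j)) = mid E j + 2"
    using split mid_Suc[of j E] mid_Suc[of "Suc j" E] by simp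
  then have leaves_T: "leaves T = mid E j + 2 + R"
    using assms(1) mid_add_sum_drop[of E "Suc (Suc j)"] unfolding R_def by (simp add: vertices_def)
  have "length E - Suc (Suc j) \<le> R"
    using length_le_sum_leaves[of "drop (Suc (Suc j)) E"] unfolding R_def by simp
  moreover have "length E \<le> Suc (Suc j) \<Longrightarrow> R = 0"
    unfolding R_def by simp
  ultimately show ?thesis using leaves_T split by linarith
qed

lemma last_split_deleted_iff:
  assumes "(T, E) \<in> vertices" "D \<subseteq> maxtr (T, E)"
  shows "leaves T - 2 \<in> {mid E j | j. MSplit j \<in> D} \<and> leaves T - 2 \<in> mcarets 0 T
    \<longleftrightarrow> 2 \<le> length E \<and> MSplit (length E - 2) \<in> D"
proof
  assume "leaves T - 2 \<in> {mid E j | j. MSplit j \<in> D} \<and> leaves T - 2 \<in> mcarets 0 T"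
  then obtain j where j: "mid E j = leaves T - 2" "MSplit j \<in> D" by auto
  then have "Suc (Suc j) = length E"
    using last_split_iff[OF assms(1), of j] assms(2) by blast
  then have "length E - 2 = j" "2 \<le> length E" by simp_all
  then show "2 \<le> length E \<and> MSplit (length E - 2) \<in> D" using j(2) by simp
next
  assume last: "2 \<le> length E \<and> MSplit (length E - 2) \<in> D"
  then have in_maxtr: "MSplit (length E - 2) \<in> maxtr (T, E)" using assms(2) by blast
  have "Suc (Suc (length E - 2)) = length E" using last by arith
  then have "mid E (length E - 2) = leaves T - 2"
    using last_split_iff[OF assms(1) in_maxtr] by blast
  then show "leaves T - 2 \<in> {mid E j | j. MSplit j \<in> D} \<and> leaves T - 2 \<in> mcarets 0 T"
    using last MSplit_in_maxtrD[OF in_maxtr] by force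
qed

lemma first_split_last_imp_caret:
  assumes "(T, E) \<in> vertices" "MSplit 0 \<in> maxtr (T, E)" "length E = 2"
  shows "T = Node Leaf Leaf"
proof -
  have "leaves T - 2 = 0" "2 \<le> leaves T"
    using last_split_iff[OF assms(1,2)] assms(3) mcarets_bounds[of 0 0 T]
      MSplit_in_maxtrD[OF assms(2)] by auto
  then show ?thesis using leaves_eq_2_iff by simp
qed

lemma MSplit_in_maxtr_caret:
  assumes "MSplit j \<in> maxtr (Node Leaf Leaf, E)"
  shows "j = 0"
proof -
  have "mid E j = 0" "Suc j < length E" using MSplit_in_maxtrD[OF assms] by auto
  then show ?thesis using mid_ge[of j E] by simp
qed

definition spine_height :: "real \<Rightarrow> real \<Rightarrow> real \<Rightarrow> tree \<Rightarrow> real" where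
  "spine_height \<alpha> \<beta> \<gamma> T =
     (if T = Leaf then - \<gamma>
      else \<alpha> * (real (left_spine T) - 1) + \<beta> * (real (right_spine T) - 1))"

definition spine_slope :: "real \<Rightarrow> real \<Rightarrow> real \<Rightarrow> picture \<Rightarrow> mtrans \<Rightarrow> real" where
  "spine_slope \<alpha> \<beta> \<gamma> P w = (case w of
      MMerge j \<Rightarrow> 0
    | MSplit j \<Rightarrow>
        if fst P = Node Leaf Leaf then \<gamma>
        else if j = 0 then \<alpha> else if Suc (Suc j) = length (snd P) then \<beta> else 0)"

lemma sum_spine_slope:
  fixes f :: "real \<Rightarrow> real"
  assumes V: "(T, E) \<in> vertices" and D: "D \<subseteq> maxtr (T, E)" and f0: "f 0 = 0"
  shows "(\<Sum>w\<in>D. f (spine_slope \<alpha> \<beta> \<gamma> (T, E) w)) =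
    (if T = Node Leaf Leaf then (if MSplit 0 \<in> D then f \<gamma> else 0)
     else (if MSplit 0 \<in> D then f \<alpha> else 0)
        + (if 2 \<le> length E \<and> MSplit (length E - 2) \<in> D then f \<beta> else 0))"
proof -
  have fin: "finite D" using D finite_maxtr finite_subset by blast
  show ?thesis
  proof (cases "T = Node Leaf Leaf")
    case True
    have "(\<Sum>w\<in>D. f (spine_slope \<alpha> \<beta> \<gamma> (T, E) w)) = (\<Sum>w\<in>D. if w = MSplit 0 then f \<gamma> else 0)"
      using D MSplit_in_maxtr_caret f0 True
      by (intro sum.cong) (auto simp: spine_slope_def split: mtrans.splits)
    then show ?thesis using fin True by (simp add: sum.delta)
  next
    case False
    have slope: "f (spine_slope \<alpha> \<beta> \<gamma> (T, E) w) = (if w = MSplit 0 then f \<alpha> else 0)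
        + (if w = MSplit (length E - 2) then if 2 \<le> length E then f \<beta> else 0 else 0)"
      if "w \<in> D" for w
    proof (cases w)
      case (MSplit j)
      then have "Suc j < length E" "j = 0 \<longrightarrow> length E \<noteq> 2"
        using that D MSplit_in_maxtrD[of j T E] first_split_last_imp_caret[OF V] False by auto
      then show ?thesis using MSplit False f0 by (auto simp: spine_slope_def)
    qed (simp add: spine_slope_def f0)
    have "(\<Sum>w\<in>D. f (spine_slope \<alpha> \<beta> \<gamma> (T, E) w)) = (\<Sum>w\<in>D. if w = MSplit 0 then f \<alpha> else 0)
        + (\<Sum>w\<in>D. if w = MSplit (length E - 2) then if 2 \<le> length E then f \<beta> else 0 else 0)"
      unfolding sum.distrib[symmetric] using slope by (rule sum.cong[OF refl])
    then show ?thesis using fin False by (simp add: sum.delta)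
  qed
qed

lemma spine_height_del:
  assumes V: "(T, E) \<in> vertices" and D: "D \<subseteq> maxtr (T, E)"
  shows "spine_height \<alpha> \<beta> \<gamma> (fst (del (T, E) D))
    = spine_height \<alpha> \<beta> \<gamma> T - (\<Sum>w\<in>D. spine_slope \<alpha> \<beta> \<gamma> (T, E) w)"
proof -
  define SD where "SD = {mid E j | j. MSplit j \<in> D}"
  note first = first_split_deleted_iff[OF D, folded SD_def]
  note last = last_split_deleted_iff[OF V D, folded SD_def]
  note sum = sum_spine_slope[OF V D, of id, simplified]
  have pruned: "fst (del (T, E) D) = prune SD 0 T" unfolding SD_def by (rule fst_del)
  consider "T = Leaf" | "T = Node Leaf Leaf" | "T \<noteq> Leaf" "T \<noteq> Node Leaf Leaf" by blast
  then show ?thesis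
  proof cases
    case 1
    then have "MSplit j \<notin> D" for j using D MSplit_in_maxtrD[of j T E] by auto
    then show ?thesis using 1 pruned sum by simp
  next
    case 2
    then show ?thesis using pruned sum first by (auto simp: spine_height_def)
  next
    case 3
    then have "prune SD 0 T \<noteq> Leaf" "1 \<le> left_spine T" "1 \<le> right_spine T"
      using prune_eq_LeafD by (blast, (cases T, auto)+)
    then show ?thesis
      using 3 pruned sum first last left_spine_prune[of SD 0 T] right_spine_prune[of SD 0 T]
      by (simp add: spine_height_def of_nat_diff algebra_simps)
  qed
qed

lemma sum_spine_slope_sq_le:
  assumes "(T, E) \<in> vertices" "W \<subseteq> maxtr (T, E)" "\<alpha>\<^sup>2 + \<beta>\<^sup>2 \<le> 1" "\<gamma>\<^sup>2 \<le> 1"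
  shows "(\<Sum>w\<in>W. (spine_slope \<alpha> \<beta> \<gamma> (T, E) w)\<^sup>2) \<le> 1"
proof -
  have "\<alpha>\<^sup>2 \<le> 1" "\<beta>\<^sup>2 \<le> 1"
    using assms(3) zero_le_power2[of \<alpha>] zero_le_power2[of \<beta>] by linarith+
  then show ?thesis
    using sum_spine_slope[OF assms(1,2), of power2] assms(3,4) by auto
qed

definition corner_weight :: "mtrans set \<Rightarrow> (mtrans \<Rightarrow> real) \<Rightarrow> mtrans set \<Rightarrow> real" where
  "corner_weight W t S = (\<Prod>w\<in>S. t w) * (\<Prod>w\<in>W - S. 1 - t w)"

lemma cweight_eq_sum_corner_weight:
  "cweight (P, W) t = (\<lambda>v. \<Sum>S\<in>Pow W. if v = del P (W - S) then corner_weight W t S else 0)"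
  unfolding cweight_def corner_weight_def fst_conv snd_conv by (rule refl)

lemma sum_corner_weight: "finite W \<Longrightarrow> (\<Sum>S\<in>Pow W. corner_weight W t S) = 1"
  using prod_add[of W t "\<lambda>w. 1 - t w"] by (simp add: corner_weight_def)

lemma sum_corner_weight_avoiding:
  assumes "finite W" "a \<in> W"
  shows "(\<Sum>S\<in>Pow W. if a \<notin> S then corner_weight W t S else 0) = 1 - t a"
proof -
  have "corner_weight W t S = (1 - t a) * corner_weight (W - {a}) t S" if "S \<in> Pow (W - {a})" for S
  proof -
    have "W - S = insert a (W - {a} - S)" using that assms(2) by auto
    then show ?thesis using that assms(1) by (simp add: corner_weight_def)
  qed
  moreover have "{S \<in> Pow W. a \<notin> S} = Pow (W - {a})" by auto
  ultimately have "(\<Sum>S\<in>Pow W. if a \<notin> S then corner_weight W t S else 0)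
      = (1 - t a) * (\<Sum>S\<in>Pow (W - {a}). corner_weight (W - {a}) t S)"
    using assms(1) by (simp add: sum.inter_filter[symmetric] sum_distrib_left)
  then show ?thesis using assms(1) by (simp add: sum_corner_weight)
qed

lemma sum_support_pushforward:
  fixes c :: "'i \<Rightarrow> real" and h :: "'v \<Rightarrow> real"
  assumes fin: "finite I"
  shows "(\<Sum>v\<in>{v. (\<Sum>i\<in>I. if v = \<phi> i then c i else 0) \<noteq> 0}. (\<Sum>i\<in>I. if v = \<phi> i then c i else 0) * h v)
     = (\<Sum>i\<in>I. c i * h (\<phi> i))"
proof -
  define x where "x v = (\<Sum>i\<in>I. if v = \<phi> i then c i else 0)" for v
  have "{v. x v \<noteq> 0} \<subseteq> \<phi> ` I"
    unfolding x_def by (auto elim: sum.not_neutral_contains_not_neutral split: if_splits)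
  then have "(\<Sum>v\<in>{v. x v \<noteq> 0}. x v * h v) = (\<Sum>v\<in>\<phi> ` I. x v * h v)"
    using fin by (intro sum.mono_neutral_left) auto
  also have "\<dots> = (\<Sum>v\<in>\<phi> ` I. \<Sum>i\<in>I. if v = \<phi> i then c i * h (\<phi> i) else 0)"
    unfolding x_def sum_distrib_right by (intro sum.cong) auto
  also have "\<dots> = (\<Sum>i\<in>I. c i * h (\<phi> i))"
    using fin by (subst sum.swap) (simp add: sum.delta')
  finally show ?thesis unfolding x_def .
qed

definition lin_ext :: "(picture \<Rightarrow> real) \<Rightarrow> (picture \<Rightarrow> real) \<Rightarrow> real" where
  "lin_ext g x = (\<Sum>v\<in>{v. x v \<noteq> 0}. x v * g v)"

lemma lin_ext_cweight:
  "finite W \<Longrightarrow>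
     lin_ext g (cweight (P, W) t) = (\<Sum>S\<in>Pow W. corner_weight W t S * g (del P (W - S)))"
  unfolding lin_ext_def cweight_eq_sum_corner_weight
  by (rule sum_support_pushforward) simp

lemma lin_ext_cweight_affine:
  assumes fin: "finite W" and slopes: "\<And>D. D \<subseteq> W \<Longrightarrow> g (del P D) = g P - (\<Sum>w\<in>D. d w)"
  shows "lin_ext g (cweight (P, W) t) = g P - (\<Sum>w\<in>W. d w * (1 - t w))"
proof -
  let ?cw = "corner_weight W t"
  have "lin_ext g (cweight (P, W) t)
      = (\<Sum>S\<in>Pow W. ?cw S * (g P - (\<Sum>w\<in>W. if w \<notin> S then d w else 0)))"
    unfolding lin_ext_cweight[OF fin]
  proof (intro sum.cong refl)
    fix S assume "S \<in> Pow W"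
    then have "g (del P (W - S)) = g P - (\<Sum>w\<in>W - S. d w)" by (intro slopes) auto
    also have "(\<Sum>w\<in>W - S. d w) = (\<Sum>w\<in>W. if w \<notin> S then d w else 0)"
      using fin by (simp add: sum.If_cases Diff_eq Compl_eq)
    finally show "?cw S * g (del P (W - S)) = ?cw S * (g P - (\<Sum>w\<in>W. if w \<notin> S then d w else 0))"
      by simp
  qed
  also have "\<dots> = g P * (\<Sum>S\<in>Pow W. ?cw S) - (\<Sum>w\<in>W. d w * (\<Sum>S\<in>Pow W. if w \<notin> S then ?cw S else 0))"
    by (simp add: algebra_simps sum_subtractf sum_distrib_left sum.swap[of _ W] if_distrib
        cong: if_cong)
  also have "\<dots> = g P - (\<Sum>w\<in>W. d w * (1 - t w))"
    using fin by (simp add: sum_corner_weight sum_corner_weight_avoiding)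
  finally show ?thesis .
qed

lemma lin_ext_cweight_diff_le_eucl:
  assumes fin: "finite W" and slopes: "\<And>D. D \<subseteq> W \<Longrightarrow> g (del P D) = g P - (\<Sum>w\<in>D. d w)"
    and unit: "(\<Sum>w\<in>W. (d w)\<^sup>2) \<le> 1"
  shows "lin_ext g (cweight (P, W) s) - lin_ext g (cweight (P, W) t) \<le> eucl W t s"
proof -
  have "lin_ext g (cweight (P, W) s) - lin_ext g (cweight (P, W) t) = (\<Sum>w\<in>W. d w * (s w - t w))"
    by (simp add: lin_ext_cweight_affine[OF fin slopes] sum_subtractf[symmetric] algebra_simps)
  also have "\<dots> \<le> (\<Sum>w\<in>W. \<bar>d w\<bar> * \<bar>t w - s w\<bar>)"
    by (intro sum_mono) (auto simp: abs_mult[symmetric] abs_minus_commute)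
  also have "\<dots> \<le> L2_set d W * L2_set (\<lambda>w. t w - s w) W"
    by (rule L2_set_mult_ineq)
  also have "\<dots> \<le> L2_set (\<lambda>w. t w - s w) W"
    using unit by (intro mult_left_le_one_le L2_set_nonneg) (simp add: L2_set_def)
  also have "\<dots> = eucl W t s"
    by (simp add: eucl_def L2_set_def)
  finally show ?thesis .
qed

definition cubewise_affine_1_lip :: "cube set \<Rightarrow> (picture \<Rightarrow> real) \<Rightarrow> bool" where
  "cubewise_affine_1_lip Cs g \<longleftrightarrow> (\<forall>(P, W)\<in>Cs. finite W \<and>
     (\<exists>d. (\<Sum>w\<in>W. (d w)\<^sup>2) \<le> 1 \<and> (\<forall>D\<subseteq>W. g (del P D) = g P - (\<Sum>w\<in>D. d w))))"

definition joined_by :: "cube set \<Rightarrow> (picture \<Rightarrow> real) \<Rightarrow> (picture \<Rightarrow> real) \<Rightarrow> real \<Rightarrow> bool" where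
  "joined_by Cs x y L \<longleftrightarrow> (\<exists>k C t s p. p 0 = x \<and> p k = y \<and>
      (\<forall>i<k. C i \<in> Cs \<and> t i \<in> box (snd (C i)) \<and> s i \<in> box (snd (C i)) \<and>
              p i = cweight (C i) (t i) \<and> p (Suc i) = cweight (C i) (s i)) \<and>
      L = (\<Sum>i<k. eucl (snd (C i)) (t i) (s i)))"

lemma cmetric_eq_Inf_joined_by: "cmetric Cs x y = Inf {L. joined_by Cs x y L}"
  unfolding cmetric_def joined_by_def by (rule arg_cong[where f = Inf]) blast

lemma joined_by_nonneg: "joined_by Cs x y L \<Longrightarrow> 0 \<le> L"
  unfolding joined_by_def eucl_def by (auto intro!: sum_nonneg)

lemma joined_by_mono: "Cs \<subseteq> Cs' \<Longrightarrow> joined_by Cs x y L \<Longrightarrow> joined_by Cs' x y L"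
  unfolding joined_by_def by blast

lemma joined_by_cube:
  assumes "C \<in> Cs" "t \<in> box (snd C)" "s \<in> box (snd C)"
  shows "joined_by Cs (cweight C t) (cweight C s) (eucl (snd C) t s)"
  unfolding joined_by_def
  by (rule exI[of _ 1], rule exI[of _ "\<lambda>_. C"], rule exI[of _ "\<lambda>_. t"], rule exI[of _ "\<lambda>_. s"],
      rule exI[of _ "\<lambda>i. if i = 0 then cweight C t else cweight C s"]) (use assms in auto)

lemma joined_by_trans:
  assumes "joined_by Cs x y L1" "joined_by Cs y z L2"
  shows "joined_by Cs x z (L1 + L2)"
proof -
  obtain k1 C1 t1 s1 p1 where A: "p1 0 = x" "p1 k1 = y"
    "\<forall>i<k1. C1 i \<in> Cs \<and> t1 i \<in> box (snd (C1 i)) \<and> s1 i \<in> box (snd (C1 i)) \<and>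
              p1 i = cweight (C1 i) (t1 i) \<and> p1 (Suc i) = cweight (C1 i) (s1 i)"
    "L1 = (\<Sum>i<k1. eucl (snd (C1 i)) (t1 i) (s1 i))"
    using assms(1) unfolding joined_by_def by blast
  obtain k2 C2 t2 s2 p2 where B: "p2 0 = y" "p2 k2 = z"
    "\<forall>i<k2. C2 i \<in> Cs \<and> t2 i \<in> box (snd (C2 i)) \<and> s2 i \<in> box (snd (C2 i)) \<and>
              p2 i = cweight (C2 i) (t2 i) \<and> p2 (Suc i) = cweight (C2 i) (s2 i)"
    "L2 = (\<Sum>i<k2. eucl (snd (C2 i)) (t2 i) (s2 i))"
    using assms(2) unfolding joined_by_def by blast
  define C where "C i = (if i < k1 then C1 i else C2 (i - k1))" for i
  define t where "t i = (if i < k1 then t1 i else t2 (i - k1))" for i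
  define s where "s i = (if i < k1 then s1 i else s2 (i - k1))" for i
  define p where "p i = (if i \<le> k1 then p1 i else p2 (i - k1))" for i
  have "C i \<in> Cs \<and> t i \<in> box (snd (C i)) \<and> s i \<in> box (snd (C i)) \<and>
      p i = cweight (C i) (t i) \<and> p (Suc i) = cweight (C i) (s i)" if "i < k1 + k2" for i
  proof (cases "i < k1")
    case True
    then show ?thesis using A(3) unfolding C_def t_def s_def p_def by auto
  next
    case False
    then have "i - k1 < k2" "Suc i - k1 = Suc (i - k1)" "p i = p2 (i - k1)"
      using that A(2) B(1) by (auto simp: p_def)
    then show ?thesis using B(3) False unfolding C_def t_def s_def p_def by auto
  qed
  moreover have "p 0 = x" "p (k1 + k2) = z" using A B by (auto simp: p_def)
  moreover have "(\<Sum>i<k1 + n. eucl (snd (C i)) (t i) (s i))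
      = L1 + (\<Sum>i<n. eucl (snd (C2 i)) (t2 i) (s2 i))" for n
    by (induction n) (auto simp: A(4) C_def t_def s_def)
  then have "L1 + L2 = (\<Sum>i<k1 + k2. eucl (snd (C i)) (t i) (s i))" using B(4) by simp
  ultimately show ?thesis unfolding joined_by_def by blast
qed

lemma lin_ext_diff_le_joined_by:
  assumes g: "cubewise_affine_1_lip Cs g" and "joined_by Cs x y L"
  shows "lin_ext g y - lin_ext g x \<le> L"
proof -
  obtain k C t s p where ends: "p 0 = x" "p k = y" and strings:
    "\<forall>i<k. C i \<in> Cs \<and> t i \<in> box (snd (C i)) \<and> s i \<in> box (snd (C i)) \<and>
              p i = cweight (C i) (t i) \<and> p (Suc i) = cweight (C i) (s i)"
    and L: "L = (\<Sum>i<k. eucl (snd (C i)) (t i) (s i))"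
    using assms(2) unfolding joined_by_def by blast
  have "lin_ext g y - lin_ext g x = (\<Sum>i<k. lin_ext g (p (Suc i)) - lin_ext g (p i))"
    using ends sum_lessThan_telescope[of "\<lambda>i. lin_ext g (p i)" k] by simp
  also have "\<dots> \<le> L" unfolding L
  proof (rule sum_mono)
    fix i assume "i \<in> {..<k}"
    moreover obtain P W where C: "C i = (P, W)" by fastforce
    moreover obtain d where "finite W" "(\<Sum>w\<in>W. (d w)\<^sup>2) \<le> 1"
      "\<And>D. D \<subseteq> W \<Longrightarrow> g (del P D) = g P - (\<Sum>w\<in>D. d w)"
      using g strings \<open>i \<in> {..<k}\<close> C unfolding cubewise_affine_1_lip_def by fastforce
    ultimately show "lin_ext g (p (Suc i)) - lin_ext g (p i) \<le> eucl (snd (C i)) (t i) (s i)"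
      using strings lin_ext_cweight_diff_le_eucl by simp
  qed
  finally show ?thesis .
qed

lemma cmetric_le_joined_by: "joined_by Cs x y L \<Longrightarrow> cmetric Cs x y \<le> L"
  unfolding cmetric_eq_Inf_joined_by
  by (intro cInf_lower bdd_belowI[of _ 0]) (auto dest: joined_by_nonneg)

lemma lin_ext_diff_le_cmetric:
  "cubewise_affine_1_lip Cs g \<Longrightarrow> joined_by Cs x y L \<Longrightarrow> lin_ext g y - lin_ext g x \<le> cmetric Cs x y"
  unfolding cmetric_eq_Inf_joined_by by (intro cInf_greatest) (auto intro: lin_ext_diff_le_joined_by)

lemma cmetric_eq_if_calibrated:
  assumes sub: "Cs \<subseteq> Cs'" and string: "joined_by Cs x y L"
    and g: "cubewise_affine_1_lip Cs' g" and calibrated: "L \<le> lin_ext g y - lin_ext g x"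
  shows "cmetric Cs' x y = cmetric Cs x y"
proof -
  have "cmetric Cs x y \<le> L"
    using string by (rule cmetric_le_joined_by)
  also have "L \<le> cmetric Cs' x y"
    using lin_ext_diff_le_cmetric[OF g joined_by_mono[OF sub string]] calibrated by linarith
  finally have "cmetric Cs x y \<le> cmetric Cs' x y" .
  moreover have "cmetric Cs' x y \<le> cmetric Cs x y"
    unfolding cmetric_eq_Inf_joined_by using sub string
    by (intro cInf_superset_mono bdd_belowI[of _ 0]) (auto intro: joined_by_mono dest: joined_by_nonneg)
  ultimately show ?thesis by linarith
qed

lemma spine_height_cubewise_affine_1_lip:
  assumes "\<alpha>\<^sup>2 + \<beta>\<^sup>2 \<le> 1" "\<gamma>\<^sup>2 \<le> 1"
  shows "cubewise_affine_1_lip XF_cubes (spine_height \<alpha> \<beta> \<gamma> \<circ> fst)"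
proof -
  have "finite W \<and> (\<exists>d. (\<Sum>w\<in>W. (d w)\<^sup>2) \<le> 1 \<and> (\<forall>D\<subseteq>W.
      spine_height \<alpha> \<beta> \<gamma> (fst (del (T, E) D)) = spine_height \<alpha> \<beta> \<gamma> T - (\<Sum>w\<in>D. d w)))"
    if "((T, E), W) \<in> XF_cubes" for T E W
  proof -
    have V: "(T, E) \<in> vertices" and W: "W \<subseteq> maxtr (T, E)"
      using that by (auto simp: XF_cubes_def)
    then show ?thesis
      using finite_subset[OF W finite_maxtr] sum_spine_slope_sq_le[OF V W assms] spine_height_del[OF V]
      by auto
  qed
  then show ?thesis unfolding cubewise_affine_1_lip_def by fastforce
qed

lemma lin_ext_spine_height_cweight:
  assumes "(P, W) \<in> XF_cubes"
  shows "lin_ext (spine_height \<alpha> \<beta> \<gamma> \<circ> fst) (cweight (P, W) t)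
    = spine_height \<alpha> \<beta> \<gamma> (fst P) - (\<Sum>w\<in>W. spine_slope \<alpha> \<beta> \<gamma> P w * (1 - t w))"
proof -
  obtain T E where P: "P = (T, E)" by fastforce
  have V: "(T, E) \<in> vertices" and W: "W \<subseteq> maxtr (T, E)"
    using assms P by (auto simp: XF_cubes_def)
  show ?thesis
    using lin_ext_cweight_affine[OF finite_subset[OF W finite_maxtr], of "spine_height \<alpha> \<beta> \<gamma> \<circ> fst"]
      spine_height_del[OF V] W P by auto
qed

lemma leaves_combl [simp]: "leaves (combl m) = Suc m"
  by (induction m) auto

lemma leaves_combr [simp]: "leaves (combr n) = Suc n"
  by (induction n) auto

lemma left_spine_combl [simp]: "left_spine (combl m) = m"
  by (induction m) auto

lemma right_spine_combr [simp]: "right_spine (combr n) = n"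
  by (induction n) auto

lemma mcarets_combl: "mcarets k (combl (Suc m)) = {k}"
  by (induction m arbitrary: k) auto

lemma mcarets_combr: "mcarets k (combr (Suc n)) = {k + n}"
  by (induction n arbitrary: k) auto

lemma prune_combl: "prune S k (combl (Suc m)) = (if k \<in> S then combl m else combl (Suc m))"
  by (induction m arbitrary: k) auto

lemma prune_combr: "prune S k (combr (Suc n)) = (if k + n \<in> S then combr n else combr (Suc n))"
  by (induction n arbitrary: k) (auto simp: add.assoc)

lemma left_spine_Tmn [simp]: "left_spine (Tmn m n) = Suc m"
  by (simp add: Tmn_def)

lemma right_spine_Tmn [simp]: "right_spine (Tmn m n) = Suc n"
  by (simp add: Tmn_def)

lemma leaves_Tmn [simp]: "leaves (Tmn m n) = m + n + 2"
  by (simp add: Tmn_def)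

lemma Tmn_neq_Leaf [simp]: "Tmn m n \<noteq> Leaf"
  by (simp add: Tmn_def)

lemma Tmn_0_0: "Tmn 0 0 = Node Leaf Leaf"
  by (simp add: Tmn_def)

lemma Tmn_Suc_Suc_neq_caret: "Tmn (Suc m) (Suc n) \<noteq> Node Leaf Leaf"
  by (simp add: Tmn_def)

lemma tree_pic_Tmn_eq_iff [simp]: "tree_pic (Tmn m n) = tree_pic (Tmn m' n') \<longleftrightarrow> m = m' \<and> n = n'"
  by (metis Pair_inject left_spine_Tmn right_spine_Tmn nat.inject tree_pic_def)

lemma tree_pic_Tmn_neq_Leaf [simp]: "tree_pic (Tmn m n) \<noteq> tree_pic Leaf"
  by (simp add: tree_pic_def Tmn_def)

lemma mcarets_Tmn: "mcarets 0 (Tmn (Suc m) (Suc n)) = {0, m + n + 2}"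
proof -
  have "combl (Suc m) \<noteq> Leaf" by simp
  then show ?thesis
    by (auto simp: Tmn_def mcarets_combl mcarets_combr simp del: combl.simps combr.simps)
qed

lemma prune_Tmn:
  "prune S 0 (Tmn (Suc m) (Suc n)) =
     Tmn (if 0 \<in> S then m else Suc m) (if m + n + 2 \<in> S then n else Suc n)"
proof -
  have "combl (Suc m) \<noteq> Leaf" by simp
  then show ?thesis
    by (simp add: Tmn_def prune_combl prune_combr algebra_simps del: combl.simps combr.simps)
qed

lemma tree_pic_in_vertices: "tree_pic T \<in> vertices"
  by (simp add: tree_pic_def vertices_def reduced_def sum_list_replicate)

lemma mid_replicate_Leaf: "j \<le> N \<Longrightarrow> mid (replicate N Leaf) j = j"
  by (simp add: mid_def sum_list_replicate)

lemma MSplit_in_maxtr_tree_pic: "MSplit j \<in> maxtr (tree_pic T) \<longleftrightarrow> Suc j < leaves T \<and> j \<in> mcarets 0 T"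
  by (auto simp: maxtr_def tree_pic_def mid_replicate_Leaf)

lemma del_splits_replicate_Leaf:
  assumes fin: "finite J" and J: "\<forall>j\<in>J. Suc j < N"
  shows "del (T, replicate N Leaf) (MSplit ` J) = (prune J 0 T, replicate (N - card J) Leaf)"
proof -
  have carets: "{mid (replicate N Leaf) j | j. MSplit j \<in> MSplit ` J} = J"
    using J mid_replicate_Leaf[of _ N] by (auto simp: image_iff) (metis Suc_lessD less_or_eq_imp_le)
  have "concat (map (\<lambda>j. if MMerge j \<in> MSplit ` J
                        then (case replicate N Leaf ! j of Node a b \<Rightarrow> [a, b] | Leaf \<Rightarrow> [Leaf])
                        else if 0 < j \<and> MSplit (j - 1) \<in> MSplit ` J then []
                        else [replicate N Leaf ! j]) [0..<length (replicate N Leaf)])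
      = concat (map (\<lambda>j. if 0 < j \<and> j - 1 \<in> J then [] else [Leaf]) [0..<N])"
    by (intro arg_cong[where f = concat] map_cong) auto
  also have "\<dots> = replicate (length (filter (\<lambda>j. \<not> (0 < j \<and> j - 1 \<in> J)) [0..<N])) Leaf"
  proof -
    have "concat (map (\<lambda>j. if Q j then [] else [Leaf]) js) = replicate (length (filter (Not \<circ> Q) js)) Leaf"
      for Q and js :: "nat list"
      by (induction js) auto
    then show ?thesis by (simp add: comp_def)
  qed
  also have "length (filter (\<lambda>j. \<not> (0 < j \<and> j - 1 \<in> J)) [0..<N]) = card ({..<N} - Suc ` J)"
    unfolding length_filter_conv_card
    by (intro arg_cong[where f = card]) (auto simp: image_iff, metis Suc_pred)
  also have "\<dots> = N - card J"
    using J fin by (subst card_Diff_subset) (auto simp: card_image)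
  finally show ?thesis using carets by (simp add: del_def)
qed

lemma del_Tmn_splits:
  assumes "J \<subseteq> {0, m + n + 2}"
  shows "del (tree_pic (Tmn (Suc m) (Suc n))) (MSplit ` J) =
    tree_pic (Tmn (if 0 \<in> J then m else Suc m) (if m + n + 2 \<in> J then n else Suc n))"
proof -
  have "finite J" "\<forall>j\<in>J. Suc j < leaves (Tmn (Suc m) (Suc n))"
    using assms finite_subset by auto
  then have "del (tree_pic (Tmn (Suc m) (Suc n))) (MSplit ` J) =
      (prune J 0 (Tmn (Suc m) (Suc n)), replicate (Suc m + Suc n + 2 - card J) Leaf)"
    unfolding tree_pic_def leaves_Tmn by (rule del_splits_replicate_Leaf)
  moreover have "J = {} \<or> J = {0} \<or> J = {m + n + 2} \<or> J = {0, m + n + 2}"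
    using assms by blast
  then have "Suc m + Suc n + 2 - card J =
      (if 0 \<in> J then m else Suc m) + (if m + n + 2 \<in> J then n else Suc n) + 2"
    by auto
  ultimately show ?thesis by (simp add: prune_Tmn tree_pic_def)
qed

definition K_edge :: cube where
  "K_edge = (tree_pic (Tmn 0 0), {MSplit 0})"

definition K_square :: "nat \<Rightarrow> nat \<Rightarrow> cube" where
  "K_square m n = (tree_pic (Tmn (Suc m) (Suc n)), {MSplit 0, MSplit (m + n + 2)})"

lemma K_cubes_iff: "C \<in> K_cubes \<longleftrightarrow> C = K_edge \<or> (\<exists>m n. C = K_square m n)"
  by (auto simp: K_cubes_def K_edge_def K_square_def)

lemma K_cubes_subset_XF_cubes: "K_cubes \<subseteq> XF_cubes"
proof
  fix C assume "C \<in> K_cubes"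
  then consider "C = K_edge" | m n where "C = K_square m n"
    unfolding K_cubes_iff by blast
  then show "C \<in> XF_cubes"
  proof cases
    case 1
    have "MSplit 0 \<in> maxtr (tree_pic (Tmn 0 0))"
      by (simp add: MSplit_in_maxtr_tree_pic Tmn_0_0)
    then show ?thesis using tree_pic_in_vertices by (simp add: 1 K_edge_def XF_cubes_def)
  next
    case 2
    then show ?thesis
      using tree_pic_in_vertices
      by (simp add: K_square_def XF_cubes_def MSplit_in_maxtr_tree_pic mcarets_Tmn)
  qed
qed

definition tent :: "real \<Rightarrow> real" where
  "tent x = max 0 (1 - \<bar>x\<bar>)"

lemma tent_offset:
  fixes m m' :: nat
  assumes "0 \<le> t" "t \<le> 1"
  shows "tent (real m + t - real m') = (if m' = m then 1 - t else if m' = Suc m then t else 0)"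
proof -
  consider "m' = m" | "m' = Suc m" | "real m' + 1 \<le> real m" | "real m + 2 \<le> real m'"
    by linarith
  then show ?thesis using assms by cases (auto simp: tent_def)
qed

definition quad_pt :: "real \<Rightarrow> real \<Rightarrow> picture \<Rightarrow> real" where
  "quad_pt a b v =
     (if \<exists>m n. v = tree_pic (Tmn m n)
      then tent (a - real (left_spine (fst v) - 1)) * tent (b - real (right_spine (fst v) - 1))
      else 0)"

definition edge_pt :: "real \<Rightarrow> picture \<Rightarrow> real" where
  "edge_pt s v = (if v = tree_pic (Tmn 0 0) then 1 - s else if v = tree_pic Leaf then s else 0)"

lemma quad_pt_Tmn: "quad_pt a b (tree_pic (Tmn m n)) = tent (a - real m) * tent (b - real n)"
  by (auto simp: quad_pt_def tree_pic_def)

lemma quad_pt_0_0: "quad_pt 0 0 = edge_pt 0"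
proof
  fix v
  show "quad_pt 0 0 v = edge_pt 0 v"
  proof (cases "\<exists>m n. v = tree_pic (Tmn m n)")
    case True
    then show ?thesis by (auto simp: quad_pt_Tmn edge_pt_def tent_def)
  qed (auto simp: quad_pt_def edge_pt_def)
qed

lemma Pow_doubleton: "a \<noteq> b \<Longrightarrow> Pow {a, b} = {{}, {a}, {b}, {a, b}}"
  by (auto simp: Pow_insert)

lemma cweight_K_square:
  fixes m n :: nat
  assumes "t \<in> box (snd (K_square m n))"
  shows "cweight (K_square m n) t = quad_pt (real m + t (MSplit 0)) (real n + t (MSplit (m + n + 2)))"
proof
  fix v
  define a where "a = MSplit 0"
  define b where "b = MSplit (m + n + 2)"
  have t: "0 \<le> t a" "t a \<le> 1" "0 \<le> t b" "t b \<le> 1"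
    using assms by (auto simp: box_def K_square_def a_def b_def)
  have "a \<noteq> b" by (simp add: a_def b_def)
  have del: "del (tree_pic (Tmn (Suc m) (Suc n))) {a, b} = tree_pic (Tmn m n)"
    "del (tree_pic (Tmn (Suc m) (Suc n))) {b} = tree_pic (Tmn (Suc m) n)"
    "del (tree_pic (Tmn (Suc m) (Suc n))) {a} = tree_pic (Tmn m (Suc n))"
    "del (tree_pic (Tmn (Suc m) (Suc n))) {} = tree_pic (Tmn (Suc m) (Suc n))"
    using del_Tmn_splits[of "{0, m + n + 2}" m n] del_Tmn_splits[of "{m + n + 2}" m n]
      del_Tmn_splits[of "{0}" m n] del_Tmn_splits[of "{}" m n]
    by (simp_all add: a_def b_def)
  have "cweight (K_square m n) t v =
      (if v = tree_pic (Tmn m n) then (1 - t a) * (1 - t b) else 0)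
    + (if v = tree_pic (Tmn (Suc m) n) then t a * (1 - t b) else 0)
    + (if v = tree_pic (Tmn m (Suc n)) then (1 - t a) * t b else 0)
    + (if v = tree_pic (Tmn (Suc m) (Suc n)) then t a * t b else 0)"
    unfolding K_square_def cweight_eq_sum_corner_weight a_def[symmetric] b_def[symmetric]
    using \<open>a \<noteq> b\<close> del
    by (simp add: Pow_doubleton corner_weight_def insert_Diff_if insert_commute add.assoc)
  also have "\<dots> = quad_pt (real m + t a) (real n + t b) v"
  proof (cases "\<exists>m' n'. v = tree_pic (Tmn m' n')")
    case True
    then obtain m' n' where "v = tree_pic (Tmn m' n')" by blast
    then show ?thesis
      using tent_offset[of "t a" m m'] tent_offset[of "t b" n n'] t
      by (auto simp: quad_pt_Tmn algebra_simps)
  qed (auto simp: quad_pt_def)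
  finally show "cweight (K_square m n) t v
      = quad_pt (real m + t (MSplit 0)) (real n + t (MSplit (m + n + 2))) v"
    by (simp add: a_def b_def)
qed

lemma cweight_K_edge: "cweight K_edge t = edge_pt (1 - t (MSplit 0))"
proof -
  have "del (tree_pic (Tmn 0 0)) {MSplit 0} = tree_pic Leaf"
    "del (tree_pic (Tmn 0 0)) {} = tree_pic (Tmn 0 0)"
    by (simp_all add: del_def tree_pic_def Tmn_def mid_def upt_rec)
  then show ?thesis
    by (auto simp: K_edge_def cweight_eq_sum_corner_weight Pow_insert corner_weight_def edge_pt_def)
qed

definition square_coords :: "nat \<Rightarrow> nat \<Rightarrow> real \<Rightarrow> real \<Rightarrow> mtrans \<Rightarrow> real" where
  "square_coords m n a b w = (if w = MSplit 0 then a - real m else b - real n)"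

lemma quad_pt_in_K_square:
  assumes "real m \<le> a" "a \<le> real m + 1" "real n \<le> b" "b \<le> real n + 1"
  shows "square_coords m n a b \<in> box (snd (K_square m n))"
    and "cweight (K_square m n) (square_coords m n a b) = quad_pt a b"
proof -
  show box: "square_coords m n a b \<in> box (snd (K_square m n))"
    using assms by (auto simp: box_def K_square_def square_coords_def)
  show "cweight (K_square m n) (square_coords m n a b) = quad_pt a b"
    using cweight_K_square[OF box] by (simp add: square_coords_def)
qed

lemma pts_K_cubes_cases:
  assumes "x \<in> pts K_cubes"
  shows "(\<exists>a b. 0 \<le> a \<and> 0 \<le> b \<and> x = quad_pt a b) \<or> (\<exists>s. 0 \<le> s \<and> s \<le> 1 \<and> x = edge_pt s)"
proof -
  obtain C t where x: "x = cweight C t" "C \<in> K_cubes" "t \<in> box (snd C)"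
    using assms unfolding pts_def by blast
  from x(2) consider "C = K_edge" | m n where "C = K_square m n"
    unfolding K_cubes_iff by blast
  then show ?thesis
  proof cases
    case 1
    then show ?thesis
      using x cweight_K_edge[of t] by (intro disjI2 exI[of _ "1 - t (MSplit 0)"]) (auto simp: box_def K_edge_def)
  next
    case 2
    then have "0 \<le> t (MSplit 0)" "0 \<le> t (MSplit (m + n + 2))"
      using x(3) by (auto simp: box_def K_square_def)
    then show ?thesis
      using x cweight_K_square[of t m n] 2
      by (intro disjI1 exI[of _ "real m + t (MSplit 0)"] exI[of _ "real n + t (MSplit (m + n + 2))"])
        auto
  qed
qed

lemma fst_tree_pic [simp]: "fst (tree_pic T) = T"
  by (simp add: tree_pic_def)

lemma lin_ext_spine_height_K_square:
  "lin_ext (spine_height \<alpha> \<beta> \<gamma> \<circ> fst) (cweight (K_square m n) t)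
    = \<alpha> * (real m + t (MSplit 0)) + \<beta> * (real n + t (MSplit (m + n + 2)))"
proof -
  have "K_square m n \<in> XF_cubes"
    using K_cubes_subset_XF_cubes K_cubes_iff by blast
  moreover have "spine_slope \<alpha> \<beta> \<gamma> (tree_pic (Tmn (Suc m) (Suc n))) (MSplit 0) = \<alpha>"
    "spine_slope \<alpha> \<beta> \<gamma> (tree_pic (Tmn (Suc m) (Suc n))) (MSplit (m + n + 2)) = \<beta>"
    using Tmn_Suc_Suc_neq_caret[of m n] by (simp_all add: spine_slope_def tree_pic_def)
  moreover have "spine_height \<alpha> \<beta> \<gamma> (Tmn (Suc m) (Suc n)) = \<alpha> * (real m + 1) + \<beta> * (real n + 1)"
    by (simp add: spine_height_def add.commute)
  ultimately show ?thesis
    unfolding K_square_def by (simp add: lin_ext_spine_height_cweight algebra_simps)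
qed

lemma lin_ext_spine_height_quad_pt:
  assumes "0 \<le> a" "0 \<le> b"
  shows "lin_ext (spine_height \<alpha> \<beta> \<gamma> \<circ> fst) (quad_pt a b) = \<alpha> * a + \<beta> * b"
proof -
  let ?m = "nat \<lfloor>a\<rfloor>" and ?n = "nat \<lfloor>b\<rfloor>"
  have "real ?m \<le> a" "a \<le> real ?m + 1" "real ?n \<le> b" "b \<le> real ?n + 1"
    using assms by linarith+
  then show ?thesis
    using lin_ext_spine_height_K_square[of \<alpha> \<beta> \<gamma> ?m ?n "square_coords ?m ?n a b"]
    by (simp add: quad_pt_in_K_square(2) square_coords_def)
qed

lemma lin_ext_spine_height_edge_pt:
  "lin_ext (spine_height \<alpha> \<beta> \<gamma> \<circ> fst) (edge_pt s) = - \<gamma> * s"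
proof -
  have "K_edge \<in> XF_cubes"
    using K_cubes_subset_XF_cubes K_cubes_iff by blast
  then show ?thesis
    using lin_ext_spine_height_cweight[of "tree_pic (Tmn 0 0)" "{MSplit 0}" \<alpha> \<beta> \<gamma> "\<lambda>_. 1 - s"]
      cweight_K_edge[of "\<lambda>_. 1 - s"]
    by (simp add: K_edge_def spine_height_def spine_slope_def tree_pic_def Tmn_0_0)
qed

lemma joined_by_K_edge:
  assumes "0 \<le> s" "s \<le> 1" "0 \<le> s'" "s' \<le> 1"
  shows "joined_by K_cubes (edge_pt s) (edge_pt s') \<bar>s - s'\<bar>"
proof -
  have "K_edge \<in> K_cubes" "snd K_edge = {MSplit 0}"
    by (simp_all add: K_cubes_iff K_edge_def)
  then show ?thesis
    using joined_by_cube[of K_edge K_cubes "\<lambda>_. 1 - s" "\<lambda>_. 1 - s'"] assms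
    by (simp add: cweight_K_edge box_def eucl_def abs_minus_commute)
qed

lemma joined_by_K_square:
  assumes "real m \<le> a" "a \<le> real m + 1" "real m \<le> a'" "a' \<le> real m + 1"
    and "real n \<le> b" "b \<le> real n + 1" "real n \<le> b'" "b' \<le> real n + 1"
  shows "joined_by K_cubes (quad_pt a b) (quad_pt a' b') (sqrt ((a - a')\<^sup>2 + (b - b')\<^sup>2))"
  using joined_by_cube[of "K_square m n" K_cubes "square_coords m n a b" "square_coords m n a' b'"]
    quad_pt_in_K_square[of m a n b] quad_pt_in_K_square[of m a' n b'] assms
  by (simp add: K_cubes_iff eucl_def K_square_def square_coords_def)

definition ints_between :: "real \<Rightarrow> real \<Rightarrow> int set" where
  "ints_between x y = {i. min x y < of_int i \<and> of_int i < max x y}"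

lemma finite_ints_between: "finite (ints_between x y)"
proof -
  have "ints_between x y \<subseteq> {\<lfloor>min x y\<rfloor>..\<lceil>max x y\<rceil>}"
    unfolding ints_between_def by (auto, linarith+)
  then show ?thesis by (rule finite_subset) simp
qed

lemma ints_between_subdivide:
  assumes "0 \<le> l" "l \<le> 1"
  shows "ints_between x (x + l * (y - x)) \<subseteq> ints_between x y"
    and "ints_between (x + l * (y - x)) y \<subseteq> ints_between x y"
proof -
  have "0 \<le> l * \<bar>y - x\<bar>" "l * \<bar>y - x\<bar> \<le> \<bar>y - x\<bar>"
    using assms by (auto simp: mult_left_le_one_le)
  then have "min x y \<le> x + l * (y - x) \<and> x + l * (y - x) \<le> max x y"
    by (cases "x \<le> y") (auto simp: algebra_simps)
  then show "ints_between x (x + l * (y - x)) \<subseteq> ints_between x y"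
    and "ints_between (x + l * (y - x)) y \<subseteq> ints_between x y"
    unfolding ints_between_def by auto
qed

definition crossings :: "real \<Rightarrow> real \<Rightarrow> real \<Rightarrow> real \<Rightarrow> nat" where
  "crossings a b a' b' = card (ints_between a a') + card (ints_between b b')"

lemma crossings_swap: "crossings b a b' a' = crossings a b a' b'"
  by (simp add: crossings_def)

lemma split_at_crossing:
  assumes c: "c \<in> ints_between a a'"
  obtains l where "0 \<le> l" "l \<le> 1"
    "crossings a b (a + l * (a' - a)) (b + l * (b' - b)) < crossings a b a' b'"
    "crossings (a + l * (a' - a)) (b + l * (b' - b)) a' b' < crossings a b a' b'"
proof
  have "a \<noteq> a'" using c by (auto simp: ints_between_def)
  define l where "l = (of_int c - a) / (a' - a)"
  have at_c: "a + l * (a' - a) = of_int c"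
    using \<open>a \<noteq> a'\<close> by (simp add: l_def)
  show l: "0 \<le> l" "l \<le> 1"
    using c \<open>a \<noteq> a'\<close> by (auto simp: l_def ints_between_def divide_simps split: if_splits)
  have "c \<notin> ints_between a (of_int c)" "c \<notin> ints_between (of_int c) a'"
    by (auto simp: ints_between_def)
  then have "card (ints_between a (a + l * (a' - a))) < card (ints_between a a')"
    "card (ints_between (a + l * (a' - a)) a') < card (ints_between a a')"
    using ints_between_subdivide[OF l, of a a'] c at_c
    by (auto intro!: psubset_card_mono finite_ints_between)
  moreover have "card (ints_between b (b + l * (b' - b))) \<le> card (ints_between b b')"
    "card (ints_between (b + l * (b' - b)) b') \<le> card (ints_between b b')"
    using ints_between_subdivide[OF l, of b b'] by (auto intro!: card_mono finite_ints_between)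
  ultimately show "crossings a b (a + l * (a' - a)) (b + l * (b' - b)) < crossings a b a' b'"
    "crossings (a + l * (a' - a)) (b + l * (b' - b)) a' b' < crossings a b a' b'"
    unfolding crossings_def by linarith+
qed

lemma split_at_some_crossing:
  assumes "crossings a b a' b' \<noteq> 0"
  obtains l where "0 \<le> l" "l \<le> 1"
    "crossings a b (a + l * (a' - a)) (b + l * (b' - b)) < crossings a b a' b'"
    "crossings (a + l * (a' - a)) (b + l * (b' - b)) a' b' < crossings a b a' b'"
proof (cases "ints_between a a' = {}")
  case True
  then have "ints_between b b' \<noteq> {}" using assms by (auto simp: crossings_def)
  then obtain c where "c \<in> ints_between b b'" by blast
  then show ?thesis
    by (rule split_at_crossing[where b = a and b' = a']) (rule that; simp add: crossings_swap)
next
  case False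
  then obtain c where "c \<in> ints_between a a'" by blast
  then show ?thesis by (rule split_at_crossing) (rule that)
qed

lemma ints_between_empty_unit_interval:
  assumes "0 \<le> x" "0 \<le> y" "ints_between x y = {}"
  obtains m :: nat where "real m \<le> x" "x \<le> real m + 1" "real m \<le> y" "y \<le> real m + 1"
proof
  let ?m = "nat \<lfloor>min x y\<rfloor>"
  have "real ?m = of_int \<lfloor>min x y\<rfloor>" using assms by simp
  then have lower: "real ?m \<le> min x y" "min x y < real ?m + 1" by linarith+
  have "int ?m + 1 \<notin> ints_between x y" using assms(3) by simp
  then have "max x y \<le> real ?m + 1"
    using lower unfolding ints_between_def by (simp add: not_less) linarith
  then show "real ?m \<le> x" "x \<le> real ?m + 1" "real ?m \<le> y" "y \<le> real ?m + 1"
    using lower by auto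
qed

lemma dist_along_segment:
  assumes "0 \<le> l" "l \<le> 1"
  shows "sqrt ((a - (a + l * (a' - a)))\<^sup>2 + (b - (b + l * (b' - b)))\<^sup>2)
       + sqrt ((a + l * (a' - a) - a')\<^sup>2 + (b + l * (b' - b) - b')\<^sup>2)
       = sqrt ((a - a')\<^sup>2 + (b - b')\<^sup>2)"
proof -
  define Q where "Q = (a - a')\<^sup>2 + (b - b')\<^sup>2"
  have "(a - (a + l * (a' - a)))\<^sup>2 + (b - (b + l * (b' - b)))\<^sup>2 = l\<^sup>2 * Q"
    "(a + l * (a' - a) - a')\<^sup>2 + (b + l * (b' - b) - b')\<^sup>2 = (1 - l)\<^sup>2 * Q"
    unfolding Q_def by (simp_all add: power2_eq_square algebra_simps)
  then show ?thesis
    using assms by (simp add: Q_def[symmetric] real_sqrt_mult algebra_simps)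
qed

text \<open>Straight segments of the quadrant are cut at the points where a coordinate is an
integer; induction on the number of such points reduces to a single square.\<close>

lemma joined_by_K_quadrant:
  assumes "0 \<le> a" "0 \<le> b" "0 \<le> a'" "0 \<le> b'"
  shows "joined_by K_cubes (quad_pt a b) (quad_pt a' b') (sqrt ((a - a')\<^sup>2 + (b - b')\<^sup>2))"
  using assms
proof (induction "crossings a b a' b'" arbitrary: a b a' b' rule: less_induct)
  case less
  show ?case
  proof (cases "crossings a b a' b' = 0")
    case True
    then have "ints_between a a' = {}" "ints_between b b' = {}"
      by (simp_all add: crossings_def finite_ints_between)
    then obtain m n :: nat where "real m \<le> a" "a \<le> real m + 1" "real m \<le> a'" "a' \<le> real m + 1"
      and "real n \<le> b" "b \<le> real n + 1" "real n \<le> b'" "b' \<le> real n + 1"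
      using ints_between_empty_unit_interval less.prems by metis
    then show ?thesis by (rule joined_by_K_square)
  next
    case False
    then obtain l where l: "0 \<le> l" "l \<le> 1"
      and fewer: "crossings a b (a + l * (a' - a)) (b + l * (b' - b)) < crossings a b a' b'"
        "crossings (a + l * (a' - a)) (b + l * (b' - b)) a' b' < crossings a b a' b'"
      by (rule split_at_some_crossing)
    have "0 \<le> (1 - l) * a + l * a'" "0 \<le> (1 - l) * b + l * b'"
      using l less.prems by simp_all
    then have "0 \<le> a + l * (a' - a)" "0 \<le> b + l * (b' - b)"
      by (simp_all add: algebra_simps)
    then have "joined_by K_cubes (quad_pt a b) (quad_pt (a + l * (a' - a)) (b + l * (b' - b)))
        (sqrt ((a - (a + l * (a' - a)))\<^sup>2 + (b - (b + l * (b' - b)))\<^sup>2))"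
      "joined_by K_cubes (quad_pt (a + l * (a' - a)) (b + l * (b' - b))) (quad_pt a' b')
        (sqrt ((a + l * (a' - a) - a')\<^sup>2 + (b + l * (b' - b) - b')\<^sup>2))"
      using less.hyps[OF fewer(1)] less.hyps[OF fewer(2)] less.prems by blast+
    from joined_by_trans[OF this] show ?thesis
      by (simp only: dist_along_segment[OF l])
  qed
qed

lemma exists_unit_functional:
  fixes dx dy :: real
  obtains \<alpha> \<beta> where "\<alpha>\<^sup>2 + \<beta>\<^sup>2 \<le> 1" "\<alpha> * dx + \<beta> * dy = sqrt (dx\<^sup>2 + dy\<^sup>2)"
proof (cases "dx\<^sup>2 + dy\<^sup>2 = 0")
  case True
  then show ?thesis using that[of 0 0] by simp
next
  case False
  define D where "D = sqrt (dx\<^sup>2 + dy\<^sup>2)"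
  have D: "D\<^sup>2 = dx\<^sup>2 + dy\<^sup>2" "D \<noteq> 0"
    using False by (simp_all add: D_def)
  have "(dx / D)\<^sup>2 + (dy / D)\<^sup>2 = (dx\<^sup>2 + dy\<^sup>2) / D\<^sup>2"
    by (simp add: power_divide add_divide_distrib)
  then have unit: "(dx / D)\<^sup>2 + (dy / D)\<^sup>2 = 1"
    using D False by simp
  have "dx / D * dx + dy / D * dy = (dx\<^sup>2 + dy\<^sup>2) / D"
    by (simp add: power2_eq_square add_divide_distrib)
  also have "\<dots> = D"
    unfolding D(1)[symmetric] using D(2) by (simp add: power2_eq_square)
  finally show ?thesis using that[of "dx / D" "dy / D"] unit by (simp add: D_def)
qed

definition calibrated_in_K :: "(picture \<Rightarrow> real) \<Rightarrow> (picture \<Rightarrow> real) \<Rightarrow> bool" where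
  "calibrated_in_K x y \<longleftrightarrow> (\<exists>L \<alpha> \<beta> \<gamma>. joined_by K_cubes x y L \<and> \<alpha>\<^sup>2 + \<beta>\<^sup>2 \<le> 1 \<and> \<gamma>\<^sup>2 \<le> 1 \<and>
     L \<le> lin_ext (spine_height \<alpha> \<beta> \<gamma> \<circ> fst) y - lin_ext (spine_height \<alpha> \<beta> \<gamma> \<circ> fst) x)"

lemma calibrated_in_K_quadrant:
  assumes "0 \<le> a" "0 \<le> b" "0 \<le> a'" "0 \<le> b'"
  shows "calibrated_in_K (quad_pt a b) (quad_pt a' b')"
proof -
  obtain \<alpha> \<beta> where "\<alpha>\<^sup>2 + \<beta>\<^sup>2 \<le> 1" "\<alpha> * (a' - a) + \<beta> * (b' - b) = sqrt ((a - a')\<^sup>2 + (b - b')\<^sup>2)"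
    using exists_unit_functional[of "a' - a" "b' - b"] by (metis power2_commute)
  then show ?thesis
    unfolding calibrated_in_K_def using joined_by_K_quadrant[OF assms]
    by (intro exI[of _ "sqrt ((a - a')\<^sup>2 + (b - b')\<^sup>2)"] exI[of _ \<alpha>] exI[of _ \<beta>] exI[of _ 0])
      (simp add: lin_ext_spine_height_quad_pt assms algebra_simps)
qed

lemma calibrated_in_K_edge:
  assumes "0 \<le> s" "s \<le> 1" "0 \<le> s'" "s' \<le> 1"
  shows "calibrated_in_K (edge_pt s) (edge_pt s')"
  unfolding calibrated_in_K_def using joined_by_K_edge[OF assms]
  by (intro exI[of _ "\<bar>s - s'\<bar>"] exI[of _ 0] exI[of _ 0] exI[of _ "if s' \<le> s then 1 else - 1"])
    (auto simp: lin_ext_spine_height_edge_pt)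

lemma calibrated_in_K_edge_quadrant:
  assumes "0 \<le> s" "s \<le> 1" "0 \<le> a" "0 \<le> b"
  shows "calibrated_in_K (edge_pt s) (quad_pt a b)"
    and "calibrated_in_K (quad_pt a b) (edge_pt s)"
proof -
  obtain \<alpha> \<beta> where unit: "\<alpha>\<^sup>2 + \<beta>\<^sup>2 \<le> 1" "\<alpha> * a + \<beta> * b = sqrt (a\<^sup>2 + b\<^sup>2)"
    using exists_unit_functional .
  have "joined_by K_cubes (edge_pt s) (edge_pt 0) s" "joined_by K_cubes (edge_pt 0) (edge_pt s) s"
    using joined_by_K_edge[of s 0] joined_by_K_edge[of 0 s] assms by simp_all
  moreover have "joined_by K_cubes (edge_pt 0) (quad_pt a b) (sqrt (a\<^sup>2 + b\<^sup>2))"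
    "joined_by K_cubes (quad_pt a b) (edge_pt 0) (sqrt (a\<^sup>2 + b\<^sup>2))"
    using joined_by_K_quadrant[of 0 0 a b] joined_by_K_quadrant[of a b 0 0] assms
    by (simp_all add: quad_pt_0_0)
  ultimately have "joined_by K_cubes (edge_pt s) (quad_pt a b) (s + sqrt (a\<^sup>2 + b\<^sup>2))"
    "joined_by K_cubes (quad_pt a b) (edge_pt s) (sqrt (a\<^sup>2 + b\<^sup>2) + s)"
    by (blast intro: joined_by_trans)+
  then show "calibrated_in_K (edge_pt s) (quad_pt a b)"
    and "calibrated_in_K (quad_pt a b) (edge_pt s)"
    unfolding calibrated_in_K_def
    using unit assms(3,4) lin_ext_spine_height_quad_pt lin_ext_spine_height_edge_pt
    by (intro exI[of _ "s + sqrt (a\<^sup>2 + b\<^sup>2)"] exI[of _ \<alpha>] exI[of _ \<beta>] exI[of _ 1], simp,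
        intro exI[of _ "sqrt (a\<^sup>2 + b\<^sup>2) + s"] exI[of _ "- \<alpha>"] exI[of _ "- \<beta>"] exI[of _ "- 1"], simp)
qed

lemma calibrated_in_K_pts:
  assumes "x \<in> pts K_cubes" "y \<in> pts K_cubes"
  shows "calibrated_in_K x y"
  using pts_K_cubes_cases[OF assms(1)] pts_K_cubes_cases[OF assms(2)]
  by (auto intro: calibrated_in_K_quadrant calibrated_in_K_edge calibrated_in_K_edge_quadrant)

theorem lemma6p1:
  shows "K_cubes \<subseteq> XF_cubes \<and>
    (\<forall>x\<in>pts K_cubes. \<forall>y\<in>pts K_cubes. cmetric XF_cubes x y = cmetric K_cubes x y)"
proof (intro conjI ballI)
  show "K_cubes \<subseteq> XF_cubes" by (rule K_cubes_subset_XF_cubes)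
next
  fix x y assume "x \<in> pts K_cubes" "y \<in> pts K_cubes"
  then obtain L \<alpha> \<beta> \<gamma> where string: "joined_by K_cubes x y L"
    and slopes: "\<alpha>\<^sup>2 + \<beta>\<^sup>2 \<le> 1" "\<gamma>\<^sup>2 \<le> 1"
    and calibrated: "L \<le> lin_ext (spine_height \<alpha> \<beta> \<gamma> \<circ> fst) y - lin_ext (spine_height \<alpha> \<beta> \<gamma> \<circ> fst) x"
    using calibrated_in_K_pts unfolding calibrated_in_K_def by blast
  show "cmetric XF_cubes x y = cmetric K_cubes x y"
    using cmetric_eq_if_calibrated[OF K_cubes_subset_XF_cubes string
        spine_height_cubewise_affine_1_lip[OF slopes] calibrated] .
qed

end
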